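(* Let $k, p \in \mathbb{R}^{+}$, $m \in \mathbb{N}$ and $a, b \in \mathbb{R}$. Define $$\mathcal{F}(k,m,a,b,p) = \int_0^\infty x^{k-1} Q_m(a\sqrt{x}, b)\, e^{-px}\,{\rm d}x .$$ Then $$\mathcal{F}(k,m,a,b,p) = \frac{\Gamma(k)}{p^k} - \frac{2^k\Gamma(k)\, e^{-\frac{b^2}{2}}}{(a^2+2p)^k}\,\Phi_2\!\left(1,k,1;\frac{b^2}{2},\frac{a^2b^2}{2a^2+4p}\right) + \frac{2^k\Gamma(k)\, e^{-\frac{b^2}{2}}}{(a^2+2p)^k}\sum_{n=0}^{m-1}\frac{b^{2n}}{n!\,2^n}\,{}_1F_1\!\left(k;n+1;\frac{a^2b^2}{2a^2+4p}\right).$$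
   Context: $Q_m(\alpha,\beta)$ is the generalized Marcum $Q$-function, $Q_m(\alpha,\beta) = \alpha^{1-m}\int_\beta^\infty t^{m} e^{-(t^2+\alpha^2)/2} I_{m-1}(\alpha t)\,{\rm d}t$ (with the limiting value for $\alpha=0$), where $I_{\nu}$ is the modified Bessel function of the first kind. $\Gamma$ is the Euler Gamma function, $(x)_n=\Gamma(x+n)/\Gamma(x)$ is the Pochhammer symbol, ${}_1F_1(\alpha;\gamma;z)=\sum_{l\ge 0}\frac{(\alpha)_l}{(\gamma)_l}\frac{z^l}{l!}$ is the Kummer confluent hypergeometric function, and $\Phi_2$ is the Humbert hypergeometric function of the second kind, $\Phi_2(\beta,\beta',\gamma;x,y)=\sum_{n\ge0}\sum_{l\ge0}\frac{(\beta)_n(\beta')_l}{(\gamma)_{n+l}}\frac{x^n}{n!}\frac{y^l}{l!}$. *)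

theory Defs
  imports "HOL-Analysis.Analysis"
begin

definition besselI :: "nat \<Rightarrow> real \<Rightarrow> real" where
  "besselI n z = (\<Sum>l. (z / 2) ^ (2 * l + n) / (fact l * Gamma (real (l + n) + 1)))"

text \<open>Generalized Marcum Q-function for m \<ge> 1:
  Q_m(alpha,beta) = alpha^(1-m) int_beta^infty t^m exp(-(t^2+alpha^2)/2) I_(m-1)(alpha t) dt,
  and for alpha = 0 its limiting value, obtained from
  alpha^(1-m) I_(m-1)(alpha t) \<longrightarrow> t^(m-1) / (2^(m-1) (m-1)!) as alpha \<rightarrow> 0.\<close>
definition marcumQ :: "nat \<Rightarrow> real \<Rightarrow> real \<Rightarrow> real" where
  "marcumQ m \<alpha> \<beta> =
     (if \<alpha> = 0 then
        (LBINT t:{\<beta>..}. t ^ m * exp (- (t\<^sup>2) / 2) * t ^ (m - 1) / (2 ^ (m - 1) * fact (m - 1)))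
      else
        \<alpha> powi (1 - int m) *
        (LBINT t:{\<beta>..}. t ^ m * exp (- (t\<^sup>2 + \<alpha>\<^sup>2) / 2) * besselI (m - 1) (\<alpha> * t)))"

definition hyp1F1 :: "real \<Rightarrow> real \<Rightarrow> real \<Rightarrow> real" where
  "hyp1F1 \<alpha> \<gamma> z = (\<Sum>l. pochhammer \<alpha> l / pochhammer \<gamma> l * z ^ l / fact l)"

definition humbert_Phi2 :: "real \<Rightarrow> real \<Rightarrow> real \<Rightarrow> real \<Rightarrow> real \<Rightarrow> real" where
  "humbert_Phi2 \<beta> \<beta>' \<gamma> x y =
     (\<Sum>n. \<Sum>l. pochhammer \<beta> n * pochhammer \<beta>' l / pochhammer \<gamma> (n + l)
                 * x ^ n / fact n * y ^ l / fact l)"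

definition marcumF :: "real \<Rightarrow> nat \<Rightarrow> real \<Rightarrow> real \<Rightarrow> real \<Rightarrow> real" where
  "marcumF k m a b p = (LBINT x:{0<..}. x powr (k - 1) * marcumQ m (a * sqrt x) b * exp (- p * x))"

end

theory Submission
  imports Defs "HOL-Probability.Distributions"
begin

text \<open>Expanding the Bessel function writes Q_m(\<alpha>, \<beta>) as a Poisson mixture, with mean \<alpha>^2/2,
  of the incomplete gamma ratios \<Gamma>(m + l, s) / \<Gamma>(m + l) = e^(-s) S(m + l), where s = \<beta>^2/2 and
  S(n) = \<Sum>j<n. s^j/j!; each ratio is the tail integral of a chi density. For \<alpha> = a sqrt x the
  l-th Poisson weight is (a^2 x/2)^l/l! e^(-a^2 x/2), so integrating termwise against
  x^(k-1) e^(-p x) produces Gamma integrals with rate c = p + a^2/2 and gives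
  F = \<Gamma>(k)/c^k \<Sum>l. (k)_l r^l/l! e^(-s) S(l + m) with r = a^2/(2c). Finally
  e^(-s) S(l + m) = 1 - e^(-s) (e^s - S(l)) + e^(-s) (S(l + m) - S(l)), and the three resulting
  series are the binomial series (1 - r)^(-k), the Humbert series \<Phi>_2(1, k, 1; s, s r) (after
  exchanging the order of a nonnegative double series) and the finite sum of the Kummer series
  s^n/n! 1F1(k; n + 1; s r).\<close>

section \<open>Chi densities and the incomplete gamma ratio\<close>

definition upper_gamma_ratio :: "nat \<Rightarrow> real \<Rightarrow> real" where
  "upper_gamma_ratio N s = exp (- s) * (\<Sum>j<N. s ^ j / fact j)"

definition chi_kernel :: "nat \<Rightarrow> real \<Rightarrow> real" where
  "chi_kernel n t = t * (t\<^sup>2 / 2) ^ n * exp (- (t\<^sup>2) / 2) / fact n"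

lemma sums_exp_real: "(\<lambda>n. x ^ n / fact n) sums exp (x :: real)"
  using exp_converges[of x] by (simp add: divide_inverse mult.commute)

lemma sum_power_div_fact_le_exp:
  fixes s :: real
  assumes "0 \<le> s" and "finite J"
  shows "(\<Sum>j\<in>J. s ^ j / fact j) \<le> exp s"
  using sum_le_suminf[of "\<lambda>j. s ^ j / fact j" J] sums_exp_real[of s] assms
  by (auto simp: sums_iff)

lemma power_div_fact_le_exp: "0 \<le> x \<Longrightarrow> x ^ n / fact n \<le> exp (x :: real)"
  using sum_power_div_fact_le_exp[of x "{n}"] by simp

lemma upper_gamma_ratio_nonneg: "0 \<le> s \<Longrightarrow> 0 \<le> upper_gamma_ratio N s"
  unfolding upper_gamma_ratio_def by (intro mult_nonneg_nonneg sum_nonneg) auto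

lemma upper_gamma_ratio_le_1: "0 \<le> s \<Longrightarrow> upper_gamma_ratio N s \<le> 1"
  unfolding upper_gamma_ratio_def
  using mult_left_mono[OF sum_power_div_fact_le_exp[of s "{..<N}"], of "exp (- s)"]
  by (simp add: exp_minus)

lemma has_real_derivative_upper_gamma_ratio:
  "((\<lambda>t. upper_gamma_ratio (Suc n) (t\<^sup>2 / 2)) has_real_derivative - chi_kernel n t) (at t)"
proof (induction n)
  case 0
  show ?case unfolding upper_gamma_ratio_def chi_kernel_def
    by (auto intro!: derivative_eq_intros simp: power2_eq_square)
next
  case (Suc n)
  have split: "upper_gamma_ratio (Suc (Suc n)) (t\<^sup>2 / 2)
      = upper_gamma_ratio (Suc n) (t\<^sup>2 / 2) + exp (- (t\<^sup>2 / 2)) * ((t\<^sup>2 / 2) ^ Suc n / fact (Suc n))"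
    for t
    unfolding upper_gamma_ratio_def by (simp add: algebra_simps)
  have "((\<lambda>t. exp (- (t\<^sup>2 / 2)) * ((t\<^sup>2 / 2) ^ Suc n / fact (Suc n))) has_real_derivative
      chi_kernel n t - chi_kernel (Suc n) t) (at t)"
    unfolding chi_kernel_def
    apply (rule derivative_eq_intros refl | simp only: fact_nonzero not_False_eq_True)+
    apply (simp only: power_Suc fact_Suc of_nat_Suc)
    apply (simp add: divide_simps)
    done
  from DERIV_add[OF Suc this] show ?case
    unfolding split by simp
qed

lemma upper_gamma_ratio_tendsto_0: "((\<lambda>t. upper_gamma_ratio N (t\<^sup>2 / 2)) \<longlongrightarrow> 0) at_top"
proof -
  have "filterlim (\<lambda>t :: real. t\<^sup>2 / 2) at_top at_top"
    by (intro filterlim_tendsto_pos_mult_at_top[where c = "1/2" and f = "\<lambda>_. 1/2", simplified]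
        filterlim_pow_at_top filterlim_ident) auto
  from filterlim_compose[OF tendsto_power_div_exp_0 this]
  have "((\<lambda>t :: real. (t\<^sup>2 / 2) ^ j / exp (t\<^sup>2 / 2)) \<longlongrightarrow> 0) at_top" for j
    by (simp add: o_def)
  then have "((\<lambda>t :: real. \<Sum>j<N. (t\<^sup>2 / 2) ^ j / exp (t\<^sup>2 / 2) / fact j) \<longlongrightarrow> (\<Sum>j<N. 0 / fact j)) at_top"
    by (intro tendsto_sum tendsto_divide tendsto_const) auto
  moreover have "upper_gamma_ratio N (t\<^sup>2 / 2) = (\<Sum>j<N. (t\<^sup>2 / 2) ^ j / exp (t\<^sup>2 / 2) / fact j)" for t
    unfolding upper_gamma_ratio_def by (simp add: sum_distrib_left exp_minus field_simps)
  ultimately show ?thesis by simp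
qed

lemma chi_kernel_eq_std_normal_moment:
  "chi_kernel n t = sqrt (2 * pi) / (2 ^ n * fact n) * (std_normal_density t * t ^ (2 * n + 1))"
  unfolding chi_kernel_def normal_density_def
  by (simp add: power_mult_distrib power_divide power_mult[symmetric] field_simps)

lemma integrable_chi_kernel: "integrable lborel (chi_kernel n)"
  unfolding chi_kernel_eq_std_normal_moment[abs_def]
  by (intro integrable_mult_right integrable_std_normal_moment)

lemma integral_abs_chi_kernel: "(\<integral>t. \<bar>chi_kernel n t\<bar> \<partial>lborel) = 2"
proof -
  have "(\<lambda>t. \<bar>chi_kernel n t\<bar>)
      = (\<lambda>t. sqrt (2 * pi) / (2 ^ n * fact n) * (std_normal_density t * \<bar>t\<bar> ^ (2 * n + 1)))"
    unfolding chi_kernel_eq_std_normal_moment by (simp add: abs_mult power_abs normal_density_nonneg)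
  then have "(\<integral>t. \<bar>chi_kernel n t\<bar> \<partial>lborel) = sqrt (2 * pi) / (2 ^ n * fact n) * (sqrt (2 / pi) * 2 ^ n * fact n)"
    by (simp only: integral_mult_right_zero integral_std_normal_moment_abs_odd)
  also have "\<dots> = sqrt (2 * pi) * sqrt (2 / pi)" by simp
  also have "\<dots> = 2" by (simp add: real_sqrt_mult[symmetric])
  finally show ?thesis .
qed

lemma set_integral_abs_chi_kernel_le: "A \<in> sets lborel \<Longrightarrow> (LBINT t:A. \<bar>chi_kernel n t\<bar>) \<le> 2"
  unfolding set_lebesgue_integral_def integral_abs_chi_kernel[of n, symmetric]
  by (intro integral_mono integrable_mult_indicator integrable_abs integrable_chi_kernel)
     (auto split: split_indicator)

lemma abs_chi_kernel_le: "\<bar>chi_kernel n t\<bar> \<le> \<bar>t\<bar>"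
proof -
  have "\<bar>chi_kernel n t\<bar> = \<bar>t\<bar> * ((t\<^sup>2 / 2) ^ n / fact n * exp (- (t\<^sup>2) / 2))"
    unfolding chi_kernel_def by (simp add: abs_mult)
  also have "\<dots> \<le> \<bar>t\<bar> * (exp (t\<^sup>2 / 2) * exp (- (t\<^sup>2) / 2))"
    by (intro mult_left_mono mult_right_mono power_div_fact_le_exp) auto
  also have "\<dots> = \<bar>t\<bar>" by (simp add: exp_minus[symmetric] exp_add[symmetric])
  finally show ?thesis .
qed

lemma set_integral_chi_kernel:
  "(LBINT t:{\<beta>..}. chi_kernel n t) = upper_gamma_ratio (Suc n) (\<beta>\<^sup>2 / 2)"
proof -
  let ?F = "\<lambda>t. - upper_gamma_ratio (Suc n) (t\<^sup>2 / 2)"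
  have deriv: "(?F has_real_derivative chi_kernel n t) (at t)" for t
    using DERIV_minus[OF has_real_derivative_upper_gamma_ratio] by simp
  have "(LBINT t=ereal \<beta>..\<infinity>. chi_kernel n t) = 0 - ?F \<beta>"
  proof (rule interval_integral_FTC_integrable)
    show "(?F has_vector_derivative chi_kernel n x) (at x)" for x
      using deriv by (simp add: has_real_derivative_iff_has_vector_derivative)
    show "isCont (chi_kernel n) x" for x
      unfolding chi_kernel_def[abs_def] by (intro continuous_intros) auto
    show "set_integrable lborel (einterval (ereal \<beta>) \<infinity>) (chi_kernel n)"
      unfolding set_integrable_def by (intro integrable_mult_indicator integrable_chi_kernel) simp
    show "((?F \<circ> real_of_ereal) \<longlongrightarrow> ?F \<beta>) (at_right (ereal \<beta>))"
      unfolding ereal_tendsto_simps1 using DERIV_isCont[OF deriv] unfolding isCont_def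
      by (rule tendsto_mono[OF at_le, rotated]) simp
    show "((?F \<circ> real_of_ereal) \<longlongrightarrow> 0) (at_left \<infinity>)"
      unfolding ereal_tendsto_simps1 using tendsto_minus[OF upper_gamma_ratio_tendsto_0] by simp
  qed simp
  also have "(LBINT t=ereal \<beta>..\<infinity>. chi_kernel n t) = (LBINT t:{\<beta><..}. chi_kernel n t)"
    by (simp add: interval_integral_Ioi)
  also have "\<dots> = (LBINT t:{\<beta>..}. chi_kernel n t)"
    by (rule set_integral_discrete_difference[where X = "{\<beta>}"]) auto
  finally show ?thesis by simp
qed

section \<open>The Marcum \<open>Q\<close>-function as a Poisson mixture\<close>

definition poisson_weight :: "real \<Rightarrow> nat \<Rightarrow> real" where
  "poisson_weight \<mu> l = \<mu> ^ l / fact l * exp (- \<mu>)"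

lemma poisson_weight_nonneg: "0 \<le> \<mu> \<Longrightarrow> 0 \<le> poisson_weight \<mu> l"
  unfolding poisson_weight_def by simp

lemma poisson_weight_sums: "poisson_weight \<mu> sums 1"
  using sums_mult2[OF sums_exp_real, of \<mu> "exp (- \<mu>)"]
  unfolding poisson_weight_def by (simp add: exp_minus)

lemma summable_poisson_weight_mult:
  assumes "0 \<le> \<mu>" and "\<And>l. \<bar>f l\<bar> \<le> C"
  shows "summable (\<lambda>l. poisson_weight \<mu> l * f l)"
proof (rule summable_comparison_test)
  show "summable (\<lambda>l. poisson_weight \<mu> l * C)"
    by (intro summable_mult2 sums_summable[OF poisson_weight_sums])
  show "\<exists>N. \<forall>l\<ge>N. norm (poisson_weight \<mu> l * f l) \<le> poisson_weight \<mu> l * C"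
    using assms poisson_weight_nonneg[OF assms(1)] by (auto simp: abs_mult intro: mult_left_mono)
qed

lemma summable_besselI_series:
  "summable (\<lambda>l. (z / 2) ^ (2 * l + n) / (fact l * Gamma (real (l + n) + 1)))"
proof (rule summable_comparison_test)
  show "summable (\<lambda>l. \<bar>z / 2\<bar> ^ n * (((z / 2)\<^sup>2) ^ l / fact l))"
    by (intro summable_mult sums_summable[OF sums_exp_real])
  have norm_eq: "norm ((z / 2) ^ (2 * l + n) / (fact l * Gamma (real (l + n) + 1)))
      = \<bar>z / 2\<bar> ^ n * (((z / 2)\<^sup>2) ^ l / fact l) / fact (l + n)" for l
  proof -
    have split: "(z / 2) ^ (2 * l + n) = ((z / 2)\<^sup>2) ^ l * (z / 2) ^ n"
      by (simp add: power_add power_mult)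
    have "\<bar>(z / 2) ^ (2 * l + n)\<bar> = \<bar>z / 2\<bar> ^ n * ((z / 2)\<^sup>2) ^ l"
      unfolding split abs_mult abs_of_nonneg[OF zero_le_power[OF zero_le_power2]]
      by (simp only: power_abs mult.commute)
    moreover have "Gamma (real (l + n) + 1) = fact (l + n)"
      using Gamma_fact[of "l + n", where 'a = real] by (simp add: add.commute)
    ultimately show ?thesis
      by (simp only: real_norm_def abs_divide) (simp add: field_simps)
  qed
  have le: "x / fact (l + n) \<le> x" if "0 \<le> x" for x :: real and l
    using that divide_left_mono[of 1 "fact (l + n)" x] fact_ge_1[of "l + n", where 'a = real] by simp
  show "\<exists>N. \<forall>l\<ge>N. norm ((z / 2) ^ (2 * l + n) / (fact l * Gamma (real (l + n) + 1)))
      \<le> \<bar>z / 2\<bar> ^ n * (((z / 2)\<^sup>2) ^ l / fact l)"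
    unfolding norm_eq by (intro exI allI impI le) simp
qed

lemma besselI_series_term_eq:
  assumes "\<alpha> \<noteq> 0"
  shows "inverse (\<alpha> ^ m) * (t ^ Suc m * exp (- (t\<^sup>2 + \<alpha>\<^sup>2) / 2)
           * ((\<alpha> * t / 2) ^ (2 * l + m) / (fact l * Gamma (real (l + m) + 1))))
         = poisson_weight (\<alpha>\<^sup>2 / 2) l * chi_kernel (l + m) t"
proof -
  have "exp (- (t\<^sup>2 + \<alpha>\<^sup>2) / 2) = exp (- (t\<^sup>2) / 2) * exp (- (\<alpha>\<^sup>2 / 2))"
    by (simp add: exp_add[symmetric] field_simps)
  moreover have "(\<alpha> * t / 2) ^ (2 * l + m) = (\<alpha>\<^sup>2) ^ l * \<alpha> ^ m * t ^ (2 * l + m) / 2 ^ (2 * l + m)"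
    by (simp add: power_mult_distrib power_divide power_add power_mult)
  moreover have "Gamma (real (l + m) + 1) = fact (l + m)"
    using Gamma_fact[of "l + m", where 'a = real] by (simp add: add.commute)
  ultimately show ?thesis
    unfolding poisson_weight_def chi_kernel_def using assms
    by (simp add: field_simps power_mult_distrib power_divide power_add power_mult power2_eq_square mult_ac)
qed

lemma marcumQ_integrand_eq_suminf:
  assumes "\<alpha> \<noteq> 0"
  shows "\<alpha> powi (1 - int (Suc m)) * (t ^ Suc m * exp (- (t\<^sup>2 + \<alpha>\<^sup>2) / 2) * besselI m (\<alpha> * t))
       = (\<Sum>l. poisson_weight (\<alpha>\<^sup>2 / 2) l * chi_kernel (l + m) t)"
proof -
  let ?c = "t ^ Suc m * exp (- (t\<^sup>2 + \<alpha>\<^sup>2) / 2)"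
  note summable = summable_besselI_series[of "\<alpha> * t" m]
  have "\<alpha> powi (1 - int (Suc m)) = inverse (\<alpha> ^ m)"
    by (simp add: power_int_minus)
  then have "\<alpha> powi (1 - int (Suc m)) * (?c * besselI m (\<alpha> * t))
      = (\<Sum>l. inverse (\<alpha> ^ m) * (?c * ((\<alpha> * t / 2) ^ (2 * l + m) / (fact l * Gamma (real (l + m) + 1)))))"
    unfolding besselI_def
    using suminf_mult[OF summable, of ?c] suminf_mult[OF summable_mult[OF summable], of "inverse (\<alpha> ^ m)" ?c]
    by (simp add: mult.assoc)
  also have "\<dots> = (\<Sum>l. poisson_weight (\<alpha>\<^sup>2 / 2) l * chi_kernel (l + m) t)"
    by (simp only: besselI_series_term_eq[OF assms])
  finally show ?thesis .
qed

lemma set_integral_suminf: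
  fixes g :: "nat \<Rightarrow> real \<Rightarrow> real"
  assumes "A \<in> sets lborel"
    and integrable: "\<And>l. set_integrable lborel A (g l)"
    and summable: "\<And>t. t \<in> A \<Longrightarrow> summable (\<lambda>l. \<bar>g l t\<bar>)"
    and summable_integral: "summable (\<lambda>l. LBINT t:A. \<bar>g l t\<bar>)"
  shows "(LBINT t:A. (\<Sum>l. g l t)) = (\<Sum>l. LBINT t:A. g l t)"
proof -
  have eq: "indicator A t *\<^sub>R (\<Sum>l. g l t) = (\<Sum>l. indicator A t *\<^sub>R g l t)" for t
    using suminf_mult[OF summable_rabs_cancel[OF summable], of t 1]
    by (cases "t \<in> A") simp_all
  have "(\<integral>t. (\<Sum>l. indicator A t *\<^sub>R g l t) \<partial>lborel) = (\<Sum>l. \<integral>t. indicator A t *\<^sub>R g l t \<partial>lborel)"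
  proof (rule integral_suminf)
    show "integrable lborel (\<lambda>t. indicator A t *\<^sub>R g l t)" for l
      using integrable[of l] unfolding set_integrable_def .
    show "AE t in lborel. summable (\<lambda>l. norm (indicator A t *\<^sub>R g l t))"
      using summable by (auto simp: indicator_def)
    have "(\<integral>t. norm (indicator A t *\<^sub>R g l t) \<partial>lborel) = (LBINT t:A. \<bar>g l t\<bar>)" for l
      unfolding set_lebesgue_integral_def
      by (rule arg_cong[where f = "integral\<^sup>L lborel"]) (auto simp: fun_eq_iff indicator_def)
    then show "summable (\<lambda>l. \<integral>t. norm (indicator A t *\<^sub>R g l t) \<partial>lborel)"
      using summable_integral by simp
  qed
  then show ?thesis unfolding set_lebesgue_integral_def eq .
qed

lemma marcumQ_0: "marcumQ (Suc m) 0 \<beta> = upper_gamma_ratio (Suc m) (\<beta>\<^sup>2 / 2)"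
proof -
  have "(\<lambda>t. t ^ Suc m * exp (- (t\<^sup>2) / 2) * t ^ (Suc m - 1) / (2 ^ (Suc m - 1) * fact (Suc m - 1)))
      = chi_kernel m"
    by (rule ext) (simp add: chi_kernel_def power_divide power_mult[symmetric] power_add[symmetric]
        field_simps mult_2_right)
  then show ?thesis
    unfolding marcumQ_def by (simp add: set_integral_chi_kernel)
qed

lemma marcumQ_eq_suminf:
  assumes "\<alpha> \<noteq> 0"
  shows "marcumQ (Suc m) \<alpha> \<beta> = (\<Sum>l. poisson_weight (\<alpha>\<^sup>2 / 2) l * upper_gamma_ratio (Suc (l + m)) (\<beta>\<^sup>2 / 2))"
proof -
  let ?g = "\<lambda>l t. poisson_weight (\<alpha>\<^sup>2 / 2) l * chi_kernel (l + m) t"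
  have w: "0 \<le> poisson_weight (\<alpha>\<^sup>2 / 2) l" for l
    by (simp add: poisson_weight_nonneg)
  have "marcumQ (Suc m) \<alpha> \<beta> = (LBINT t:{\<beta>..}. (\<Sum>l. ?g l t))"
    using assms unfolding marcumQ_def marcumQ_integrand_eq_suminf[OF assms, symmetric] by simp
  also have "\<dots> = (\<Sum>l. LBINT t:{\<beta>..}. ?g l t)"
  proof (rule set_integral_suminf)
    show "set_integrable lborel {\<beta>..} (?g l)" for l
      unfolding set_integrable_def
      by (intro integrable_mult_indicator integrable_mult_right integrable_chi_kernel) auto
    show "summable (\<lambda>l. \<bar>?g l t\<bar>)" for t
      using abs_chi_kernel_le w
      by (auto simp: abs_mult intro!: summable_poisson_weight_mult[where C = "\<bar>t\<bar>"])
    have "(LBINT t:{\<beta>..}. \<bar>?g l t\<bar>) = poisson_weight (\<alpha>\<^sup>2 / 2) l * (LBINT t:{\<beta>..}. \<bar>chi_kernel (l + m) t\<bar>)"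
      for l
      using w[of l] by (simp add: abs_mult)
    moreover have "0 \<le> (LBINT t:{\<beta>..}. \<bar>chi_kernel (l + m) t\<bar>)" for l
      unfolding set_lebesgue_integral_def by (intro integral_nonneg_AE AE_I2) (auto simp: indicator_def)
    ultimately show "summable (\<lambda>l. LBINT t:{\<beta>..}. \<bar>?g l t\<bar>)"
      using set_integral_abs_chi_kernel_le
      by (auto intro!: summable_poisson_weight_mult[where C = 2])
  qed simp
  also have "\<dots> = (\<Sum>l. poisson_weight (\<alpha>\<^sup>2 / 2) l * upper_gamma_ratio (Suc (l + m)) (\<beta>\<^sup>2 / 2))"
    by (simp add: set_integral_chi_kernel)
  finally show ?thesis .
qed

lemma marcumQ_sums:
  "(\<lambda>l. poisson_weight (\<alpha>\<^sup>2 / 2) l * upper_gamma_ratio (Suc (l + m)) (\<beta>\<^sup>2 / 2)) sums marcumQ (Suc m) \<alpha> \<beta>"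
proof (cases "\<alpha> = 0")
  case True
  then have "(\<lambda>l. poisson_weight (\<alpha>\<^sup>2 / 2) l * upper_gamma_ratio (Suc (l + m)) (\<beta>\<^sup>2 / 2))
      = (\<lambda>l. if l = 0 then upper_gamma_ratio (Suc m) (\<beta>\<^sup>2 / 2) else 0)"
    by (auto simp: poisson_weight_def fun_eq_iff)
  then show ?thesis
    using True sums_single[of 0 "\<lambda>_. upper_gamma_ratio (Suc m) (\<beta>\<^sup>2 / 2)"]
    by (simp add: marcumQ_0)
next
  case False
  have "summable (\<lambda>l. poisson_weight (\<alpha>\<^sup>2 / 2) l * upper_gamma_ratio (Suc (l + m)) (\<beta>\<^sup>2 / 2))"
    using upper_gamma_ratio_nonneg upper_gamma_ratio_le_1
    by (intro summable_poisson_weight_mult[where C = 1]) auto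
  then show ?thesis
    unfolding marcumQ_eq_suminf[OF False] by (rule summable_sums)
qed

section \<open>The Laplace transform\<close>

lemma has_bochner_integral_powr_exp:
  fixes c q :: real
  assumes c: "0 < c" and q: "0 < q"
  shows "has_bochner_integral lborel (\<lambda>x. indicator {0<..} x *\<^sub>R (x powr (q - 1) * exp (- c * x)))
           (Gamma q / c powr q)"
proof -
  define f where "f = (\<lambda>t::real. indicator {0..} t * t powr (q - 1) / exp t)"
  have "has_bochner_integral lborel f (Gamma q)"
    unfolding f_def
  proof (rule has_bochner_integral_nn_integral)
    show "(\<integral>\<^sup>+ x. ennreal (indicator {0..} x * x powr (q - 1) / exp x) \<partial>lborel) = ennreal (Gamma q)"
      using Gamma_conv_nn_integral_real[OF q] by simp
  qed (use q in \<open>auto simp: indicator_def Gamma_real_pos less_imp_le\<close>)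
  then have "has_bochner_integral lborel (\<lambda>x. f (0 + c * x)) (Gamma q /\<^sub>R \<bar>c\<bar>)"
    using lborel_has_bochner_integral_real_affine_iff[of c f "Gamma q" 0] c by simp
  moreover have "f (0 + c * x) = c powr (q - 1) * (indicator {0<..} x *\<^sub>R (x powr (q - 1) * exp (- c * x)))" for x
    using c unfolding f_def
    by (cases x "0 :: real" rule: linorder_cases)
       (auto simp: indicator_def powr_mult exp_minus field_simps not_le mult_less_0_iff)
  ultimately have "has_bochner_integral lborel
      (\<lambda>x. c powr (q - 1) * (indicator {0<..} x *\<^sub>R (x powr (q - 1) * exp (- c * x)))) (Gamma q / c)"
    using c by (simp add: divide_inverse mult.commute)
  from has_bochner_integral_mult_right[of "inverse (c powr (q - 1))", OF this] show ?thesis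
    using c by (simp add: powr_diff field_simps)
qed

lemma
  fixes c q :: real
  assumes "0 < c" and "0 < q"
  shows set_integrable_powr_exp: "set_integrable lborel {0<..} (\<lambda>x. x powr (q - 1) * exp (- c * x))"
    and set_integral_powr_exp: "(LBINT x:{0<..}. x powr (q - 1) * exp (- c * x)) = Gamma q / c powr q"
  using has_bochner_integral_powr_exp[OF assms]
  unfolding set_integrable_def set_lebesgue_integral_def
  by (auto intro: integrable.intros has_bochner_integral_integral_eq)

lemma Gamma_add_of_nat:
  fixes k :: real
  assumes "0 < k"
  shows "Gamma (k + real l) = pochhammer k l * Gamma k"
proof -
  have "k \<notin> \<int>\<^sub>\<le>\<^sub>0"
    using nonpos_Ints_nonpos[of k] assms by force
  then show ?thesis
    using pochhammer_Gamma[of k l] Gamma_real_pos[OF assms] by simp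
qed

definition neg_binomial_term :: "real \<Rightarrow> real \<Rightarrow> nat \<Rightarrow> real" where
  "neg_binomial_term k r l = pochhammer k l * r ^ l / fact l"

lemma neg_binomial_term_nonneg: "0 < k \<Longrightarrow> 0 \<le> r \<Longrightarrow> 0 \<le> neg_binomial_term k r l"
  unfolding neg_binomial_term_def by (simp add: pochhammer_nonneg)

lemma neg_binomial_sums:
  assumes "\<bar>r\<bar> < 1"
  shows "neg_binomial_term k r sums (1 - r) powr (- k)"
proof -
  have "((- k) gchoose n) * (- r) ^ n = neg_binomial_term k r n" for n
  proof -
    have "((- k) gchoose n) * (- r) ^ n = ((- 1) ^ n * (- 1) ^ n) * neg_binomial_term k r n"
      unfolding gbinomial_pochhammer power_minus[of r n] neg_binomial_term_def
      by (simp only: minus_minus mult_ac times_divide_eq_left times_divide_eq_right)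
    then show ?thesis
      by (simp add: power_mult_distrib[symmetric])
  qed
  with gen_binomial_real[of "- r" "- k"] assms show ?thesis
    by simp
qed

lemma summable_neg_binomial_mult:
  assumes "0 < k" "0 \<le> r" "r < 1" and "\<And>l. \<bar>f l\<bar> \<le> C"
  shows "summable (\<lambda>l. neg_binomial_term k r l * f l)"
proof (rule summable_comparison_test)
  show "summable (\<lambda>l. neg_binomial_term k r l * C)"
    using assms by (intro summable_mult2 sums_summable[OF neg_binomial_sums]) simp
  show "\<exists>N. \<forall>l\<ge>N. norm (neg_binomial_term k r l * f l) \<le> neg_binomial_term k r l * C"
    using assms neg_binomial_term_nonneg[OF assms(1,2)] by (auto simp: abs_mult intro: mult_left_mono)
qed

lemma set_integral_Gamma_term:
  fixes k c y C :: real
  assumes k: "0 < k" and c: "0 < c"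
  shows "(LBINT x:{0<..}. y ^ l / fact l * C * (x powr (k + real l - 1) * exp (- c * x)))
       = Gamma k / c powr k * (neg_binomial_term k (y / c) l * C)"
proof -
  have "(LBINT x:{0<..}. y ^ l / fact l * C * (x powr (k + real l - 1) * exp (- c * x)))
      = y ^ l / fact l * C * (Gamma (k + real l) / c powr (k + real l))"
    using set_integral_powr_exp[OF c, of "k + real l"] k by simp
  also have "\<dots> = y ^ l / fact l * C * (pochhammer k l * Gamma k / (c powr k * c ^ l))"
    using c by (simp add: Gamma_add_of_nat[OF k] powr_add powr_realpow)
  also have "\<dots> = Gamma k / c powr k * (pochhammer k l * (y ^ l / c ^ l) / fact l * C)"
    by (simp add: field_simps)
  finally show ?thesis
    unfolding neg_binomial_term_def power_divide .
qed

lemma marcumF_integrand_sums: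
  fixes k p a b x :: real
  assumes x: "0 < x"
  defines "c \<equiv> p + a\<^sup>2 / 2" and "s \<equiv> b\<^sup>2 / 2"
  shows "(\<lambda>l. (a\<^sup>2 / 2) ^ l / fact l * upper_gamma_ratio (Suc (l + m)) s
               * (x powr (k + real l - 1) * exp (- c * x)))
         sums (x powr (k - 1) * marcumQ (Suc m) (a * sqrt x) b * exp (- p * x))"
proof -
  have "(\<lambda>l. x powr (k - 1) * (poisson_weight ((a * sqrt x)\<^sup>2 / 2) l * upper_gamma_ratio (Suc (l + m)) s)
           * exp (- p * x))
      sums (x powr (k - 1) * marcumQ (Suc m) (a * sqrt x) b * exp (- p * x))"
    unfolding s_def by (intro sums_mult sums_mult2 marcumQ_sums)
  moreover have "x powr (k - 1) * (poisson_weight ((a * sqrt x)\<^sup>2 / 2) l * upper_gamma_ratio (Suc (l + m)) s)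
         * exp (- p * x)
      = (a\<^sup>2 / 2) ^ l / fact l * upper_gamma_ratio (Suc (l + m)) s * (x powr (k + real l - 1) * exp (- c * x))"
    for l
  proof -
    have sq: "(a * sqrt x)\<^sup>2 = a\<^sup>2 * x"
      using x by (simp add: power_mult_distrib)
    have exp: "exp (- (a\<^sup>2 * x) / 2) * exp (- p * x) = exp (- c * x)"
      unfolding c_def by (simp add: exp_add[symmetric] field_simps)
    have powr: "x powr (k - 1) * x ^ l = x powr (k + real l - 1)"
      using x by (simp add: powr_realpow[symmetric] powr_add[symmetric] algebra_simps)
    show ?thesis
      unfolding poisson_weight_def sq exp[symmetric] powr[symmetric]
      by (simp add: power_mult_distrib power_divide field_simps)
  qed
  ultimately show ?thesis
    by simp
qed

lemma marcumF_eq_suminf: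
  fixes k p a b :: real
  assumes k: "0 < k" and p: "0 < p"
  defines "c \<equiv> p + a\<^sup>2 / 2" and "r \<equiv> (a\<^sup>2 / 2) / (p + a\<^sup>2 / 2)" and "s \<equiv> b\<^sup>2 / 2"
  shows "marcumF k (Suc m) a b p
       = Gamma k / c powr k * (\<Sum>l. neg_binomial_term k r l * upper_gamma_ratio (Suc (l + m)) s)"
proof -
  have c: "0 < c" unfolding c_def using p by (simp add: add_pos_nonneg)
  have r: "0 \<le> r" "r < 1" unfolding r_def using p by (auto simp: add_pos_nonneg)
  have s: "0 \<le> s" unfolding s_def by simp
  define G where "G l = upper_gamma_ratio (Suc (l + m)) s" for l
  define g where "g l x = (a\<^sup>2 / 2) ^ l / fact l * G l * (x powr (k + real l - 1) * exp (- c * x))" for l x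
  have G: "0 \<le> G l" "\<bar>G l\<bar> \<le> 1" for l
    unfolding G_def using upper_gamma_ratio_nonneg[OF s] upper_gamma_ratio_le_1[OF s] by auto
  have g_sums: "(\<lambda>l. g l x) sums (x powr (k - 1) * marcumQ (Suc m) (a * sqrt x) b * exp (- p * x))"
    if "0 < x" for x
    unfolding g_def G_def c_def s_def using marcumF_integrand_sums[OF that] by simp
  have g_nonneg: "0 \<le> g l x" for l x
    unfolding g_def using G by simp
  have summable: "summable (\<lambda>l. neg_binomial_term k r l * G l)"
    using G by (intro summable_neg_binomial_mult[OF k r]) auto
  have integral_g: "(LBINT x:{0<..}. g l x) = Gamma k / c powr k * (neg_binomial_term k r l * G l)" for l
    unfolding g_def r_def c_def by (rule set_integral_Gamma_term[OF k c[unfolded c_def]])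
  have "marcumF k (Suc m) a b p = (LBINT x:{0<..}. (\<Sum>l. g l x))"
    unfolding marcumF_def
    by (rule set_lebesgue_integral_cong) (use sums_unique[OF g_sums] in auto)
  also have "\<dots> = (\<Sum>l. LBINT x:{0<..}. g l x)"
  proof (rule set_integral_suminf)
    show "set_integrable lborel {0<..} (g l)" for l
      unfolding g_def using set_integrable_powr_exp[OF c, of "k + real l"] k
      by (intro set_integrable_mult_right) auto
    show "summable (\<lambda>l. \<bar>g l x\<bar>)" if "x \<in> {0<..}" for x
      using g_sums[of x] that g_nonneg by (simp add: sums_summable)
    show "summable (\<lambda>l. LBINT x:{0<..}. \<bar>g l x\<bar>)"
      using g_nonneg summable by (simp add: integral_g)
  qed simp
  also have "\<dots> = Gamma k / c powr k * (\<Sum>l. neg_binomial_term k r l * G l)"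
    unfolding integral_g by (rule suminf_mult[OF summable])
  finally show ?thesis
    unfolding G_def .
qed

section \<open>The Humbert and Kummer series\<close>

lemma suminf_comm_nonneg:
  fixes f :: "nat \<Rightarrow> nat \<Rightarrow> real"
  assumes nonneg: "\<And>n l. 0 \<le> f n l"
    and inner: "\<And>l. summable (\<lambda>n. f n l)"
    and outer: "summable (\<lambda>l. \<Sum>n. f n l)"
  shows "(\<Sum>n. \<Sum>l. f n l) = (\<Sum>l. \<Sum>n. f n l)"
proof -
  have has_sum_inner: "((\<lambda>n. f n l) has_sum (\<Sum>n. f n l)) UNIV" for l
    using inner[of l] by (intro sums_nonneg_imp_has_sum) (auto simp: nonneg)
  have outer': "(\<lambda>l. \<Sum>n. f n l) summable_on UNIV"
    using outer by (rule summable_nonneg_imp_summable_on) (intro suminf_nonneg inner nonneg)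
  have "(\<lambda>(l, n). f n l) summable_on UNIV \<times> UNIV"
    using summable_on_SigmaI[where f = "\<lambda>(l, n). f n l" and A = UNIV and B = "\<lambda>_. UNIV"
        and g = "\<lambda>l. \<Sum>n. f n l"] has_sum_inner outer' nonneg
    by auto
  then have swapped: "(\<lambda>(n, l). f n l) summable_on UNIV \<times> UNIV"
    unfolding summable_on_swap[of "\<lambda>(l, n). f n l"] by simp
  have has_sum_swapped: "((\<lambda>l. f n l) has_sum (\<Sum>l. f n l)) UNIV" for n
  proof -
    have "((\<lambda>l. f n l) has_sum infsum (\<lambda>l. f n l) UNIV) UNIV"
      using summable_on_SigmaD1[OF swapped, of n] by simp
    moreover from this have "(\<lambda>l. f n l) sums infsum (\<lambda>l. f n l) UNIV"
      by (rule has_sum_imp_sums)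
    ultimately show ?thesis by (simp add: sums_iff)
  qed
  have outer_swapped: "(\<lambda>n. \<Sum>l. f n l) summable_on UNIV"
    using summable_on_SigmaD[of "\<lambda>(n, l). f n l" UNIV "\<lambda>_. UNIV"] swapped summable_on_SigmaD1[OF swapped]
    by (simp add: infsumI[OF has_sum_swapped])
  have "infsum (\<lambda>l. \<Sum>n. f n l) UNIV = infsum (\<lambda>n. \<Sum>l. f n l) UNIV"
    using infsum_swap_banach[of "\<lambda>l n. f n l" UNIV UNIV] \<open>(\<lambda>(l, n). f n l) summable_on UNIV \<times> UNIV\<close>
    by (simp add: infsumI[OF has_sum_inner] infsumI[OF has_sum_swapped])
  moreover have "(\<lambda>l. \<Sum>n. f n l) sums infsum (\<lambda>l. \<Sum>n. f n l) UNIV"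
    using outer' by (intro has_sum_imp_sums) simp
  moreover have "(\<lambda>n. \<Sum>l. f n l) sums infsum (\<lambda>n. \<Sum>l. f n l) UNIV"
    using outer_swapped by (intro has_sum_imp_sums) simp
  ultimately show ?thesis by (simp add: sums_iff)
qed

lemma fact_mult_fact_le_fact_add: "fact n * fact l \<le> (fact (n + l) :: real)"
proof -
  have "fact n * fact l \<le> (fact (n + l) :: nat)"
    by (rule dvd_imp_le[OF fact_fact_dvd_fact]) simp
  then show ?thesis
    by (metis of_nat_fact of_nat_le_iff of_nat_mult)
qed

lemma pochhammer_of_nat_Suc: "pochhammer (real n + 1) l = fact (n + l) / fact n"
proof -
  have "fact (n + l) = fact n * pochhammer (real n + 1) l"
    unfolding pochhammer_fact pochhammer_product' by (simp add: add.commute)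
  then show ?thesis
    by (simp add: field_simps)
qed

lemma humbert_Phi2_1_k_1_term:
  "pochhammer 1 n * pochhammer k l / pochhammer 1 (n + l) * x ^ n / fact n * (x * r) ^ l / fact l
     = neg_binomial_term k r l * (x ^ (n + l) / fact (n + l))"
  unfolding neg_binomial_term_def pochhammer_fact[symmetric]
  by (simp add: power_add power_mult_distrib field_simps)

lemma hyp1F1_Suc_term:
  "x ^ n / fact n * (pochhammer k l / pochhammer (real n + 1) l * (x * r) ^ l / fact l)
     = neg_binomial_term k r l * (x ^ (n + l) / fact (n + l))"
  unfolding neg_binomial_term_def pochhammer_of_nat_Suc
  by (simp add: power_add power_mult_distrib field_simps)

context
  fixes k r s :: real
  assumes k: "0 < k" and r: "0 \<le> r" "r < 1" and s: "0 \<le> s"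
begin

lemma summable_neg_binomial_mult_exp_term:
  "summable (\<lambda>l. neg_binomial_term k r l * (s ^ (n + l) / fact (n + l)))"
  using power_div_fact_le_exp[OF s] s by (intro summable_neg_binomial_mult[OF k r]) simp

lemma humbert_Phi2_sums:
  "(\<lambda>l. neg_binomial_term k r l * (exp s - (\<Sum>j<l. s ^ j / fact j))) sums humbert_Phi2 1 k 1 s (s * r)"
proof -
  let ?T = "\<lambda>n l. neg_binomial_term k r l * (s ^ (n + l) / fact (n + l))"
  have inner: "(\<lambda>n. ?T n l) sums (neg_binomial_term k r l * (exp s - (\<Sum>j<l. s ^ j / fact j)))" for l
    by (intro sums_mult sums_split_initial_segment sums_exp_real)
  have inner_eq: "(\<lambda>l. \<Sum>n. ?T n l) = (\<lambda>l. neg_binomial_term k r l * (exp s - (\<Sum>j<l. s ^ j / fact j)))"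
    by (intro ext sums_unique[OF inner, symmetric])
  have outer: "summable (\<lambda>l. \<Sum>n. ?T n l)"
    unfolding inner_eq using sum_power_div_fact_le_exp[OF s] s
    by (intro summable_neg_binomial_mult[OF k r, where C = "exp s"])
       (auto simp: abs_le_iff intro: sum_nonneg)
  have "humbert_Phi2 1 k 1 s (s * r) = (\<Sum>n. \<Sum>l. ?T n l)"
    unfolding humbert_Phi2_def humbert_Phi2_1_k_1_term ..
  also have "\<dots> = (\<Sum>l. \<Sum>n. ?T n l)"
    using neg_binomial_term_nonneg[OF k r(1)] s
    by (intro suminf_comm_nonneg outer sums_summable[OF inner]) simp
  finally show ?thesis
    using summable_sums[OF outer] unfolding inner_eq by simp
qed

lemma hyp1F1_Suc_eq_suminf:
  "s ^ n / fact n * hyp1F1 k (real n + 1) (s * r)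
     = (\<Sum>l. neg_binomial_term k r l * (s ^ (n + l) / fact (n + l)))"
proof -
  let ?u = "\<lambda>l. pochhammer k l / pochhammer (real n + 1) l * (s * r) ^ l / fact l"
  have u_eq: "?u = (\<lambda>l. neg_binomial_term k r l * (s ^ l / fact l * (fact n * fact l / fact (n + l))))"
    unfolding neg_binomial_term_def pochhammer_of_nat_Suc by (simp add: power_mult_distrib field_simps)
  have "\<bar>s ^ l / fact l * (fact n * fact l / fact (n + l))\<bar> \<le> exp s" for l
  proof -
    have "fact n * fact l / fact (n + l) \<le> (1 :: real)"
      using fact_mult_fact_le_fact_add[of n l] by simp
    then have "s ^ l / fact l * (fact n * fact l / fact (n + l)) \<le> s ^ l / fact l"
      using s by (intro mult_left_le) auto
    with power_div_fact_le_exp[OF s, of l] s show ?thesis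
      by simp
  qed
  then have "summable ?u"
    unfolding u_eq by (rule summable_neg_binomial_mult[OF k r])
  then have "s ^ n / fact n * hyp1F1 k (real n + 1) (s * r) = (\<Sum>l. s ^ n / fact n * ?u l)"
    unfolding hyp1F1_def by (rule suminf_mult[symmetric])
  then show ?thesis
    by (simp only: hyp1F1_Suc_term)
qed

lemma sum_hyp1F1_sums:
  "(\<lambda>l. neg_binomial_term k r l * ((\<Sum>j<l + M. s ^ j / fact j) - (\<Sum>j<l. s ^ j / fact j)))
     sums (\<Sum>n<M. s ^ n / fact n * hyp1F1 k (real n + 1) (s * r))"
proof -
  let ?T = "\<lambda>n l. neg_binomial_term k r l * (s ^ (n + l) / fact (n + l))"
  have shifted: "(\<Sum>n<M. s ^ (n + l) / fact (n + l)) = (\<Sum>j<l + M. s ^ j / fact j) - (\<Sum>j<l. s ^ j / fact j)"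
    for l
    by (induction M) (simp_all add: add.commute)
  have "(\<lambda>l. \<Sum>n<M. ?T n l)
      = (\<lambda>l. neg_binomial_term k r l * ((\<Sum>j<l + M. s ^ j / fact j) - (\<Sum>j<l. s ^ j / fact j)))"
    by (intro ext) (simp only: sum_distrib_left[symmetric] shifted)
  moreover have "(\<lambda>l. \<Sum>n<M. ?T n l) sums (\<Sum>n<M. \<Sum>l. ?T n l)"
    by (intro sums_sum summable_sums summable_neg_binomial_mult_exp_term)
  ultimately show ?thesis
    by (simp only: hyp1F1_Suc_eq_suminf)
qed

lemma neg_binomial_upper_gamma_ratio_sums:
  "(\<lambda>l. neg_binomial_term k r l * upper_gamma_ratio (l + M) s)
     sums ((1 - r) powr (- k) - exp (- s) * humbert_Phi2 1 k 1 s (s * r)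
           + exp (- s) * (\<Sum>n<M. s ^ n / fact n * hyp1F1 k (real n + 1) (s * r)))"
proof -
  let ?S = "\<lambda>l. \<Sum>j<l. s ^ j / fact j"
  have "neg_binomial_term k r l * upper_gamma_ratio (l + M) s
      = neg_binomial_term k r l - exp (- s) * (neg_binomial_term k r l * (exp s - ?S l))
        + exp (- s) * (neg_binomial_term k r l * (?S (l + M) - ?S l))" for l
    unfolding upper_gamma_ratio_def by (simp add: algebra_simps exp_minus)
  moreover have "neg_binomial_term k r sums (1 - r) powr (- k)"
    using r by (intro neg_binomial_sums) simp
  ultimately show ?thesis
    using sums_add[OF sums_diff[OF _ sums_mult[OF humbert_Phi2_sums, of "exp (- s)"]]
        sums_mult[OF sum_hyp1F1_sums, of "exp (- s)"]]
    by simp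
qed

end

lemma marcumF_eq_hypergeometric:
  fixes k p a b :: real
  assumes k: "0 < k" and p: "0 < p"
  defines "c \<equiv> p + a\<^sup>2 / 2" and "r \<equiv> (a\<^sup>2 / 2) / (p + a\<^sup>2 / 2)" and "s \<equiv> b\<^sup>2 / 2"
  shows "marcumF k (Suc m) a b p = Gamma k / c powr k *
           ((1 - r) powr (- k) - exp (- s) * humbert_Phi2 1 k 1 s (s * r)
            + exp (- s) * (\<Sum>n<Suc m. s ^ n / fact n * hyp1F1 k (real n + 1) (s * r)))"
proof -
  have r: "0 \<le> r" "r < 1" and s: "0 \<le> s"
    unfolding r_def s_def using p by (auto simp: add_pos_nonneg)
  show ?thesis
    using neg_binomial_upper_gamma_ratio_sums[OF k r s, of "Suc m"] marcumF_eq_suminf[OF k p, of m a b]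
    unfolding c_def r_def s_def by (simp add: sums_iff)
qed

theorem theorem3:
  fixes k p a b :: real and m :: nat
  assumes "k > 0" and "p > 0" and "m \<ge> 1"
  shows "marcumF k m a b p =
           Gamma k / p powr k
         - 2 powr k * Gamma k * exp (- (b\<^sup>2) / 2) / (a\<^sup>2 + 2 * p) powr k
             * humbert_Phi2 1 k 1 (b\<^sup>2 / 2) (a\<^sup>2 * b\<^sup>2 / (2 * a\<^sup>2 + 4 * p))
         + 2 powr k * Gamma k * exp (- (b\<^sup>2) / 2) / (a\<^sup>2 + 2 * p) powr k
             * (\<Sum>n<m. b ^ (2 * n) / (fact n * 2 ^ n)
                 * hyp1F1 k (real n + 1) (a\<^sup>2 * b\<^sup>2 / (2 * a\<^sup>2 + 4 * p)))"
proof -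
  obtain m' where m: "m = Suc m'"
    using assms(3) by (cases m) auto
  define c where "c = p + a\<^sup>2 / 2"
  define r where "r = (a\<^sup>2 / 2) / c"
  define s where "s = b\<^sup>2 / 2"
  have c: "0 < c"
    unfolding c_def using assms(2) by (simp add: add_pos_nonneg)
  note F = marcumF_eq_hypergeometric[OF assms(1,2), of m' a b, folded c_def, folded r_def s_def m]
  have "1 - r = (c - a\<^sup>2 / 2) / c"
    unfolding r_def using c by (simp add: field_simps)
  then have "1 - r = p / c"
    by (simp add: c_def)
  then have "Gamma k / c powr k * (1 - r) powr (- k) = Gamma k / p powr k"
    using assms(2) c by (simp add: powr_minus powr_divide)
  moreover have "(a\<^sup>2 + 2 * p) powr k = 2 powr k * c powr k"
    using c by (simp add: c_def powr_mult[symmetric] algebra_simps)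
  then have "2 powr k * Gamma k * exp (- (b\<^sup>2) / 2) / (a\<^sup>2 + 2 * p) powr k = Gamma k / c powr k * exp (- s)"
    using c by (simp add: s_def field_simps)
  moreover have "a\<^sup>2 * b\<^sup>2 / (2 * a\<^sup>2 + 4 * p) = s * r"
    unfolding s_def r_def c_def using assms(2) by (simp add: field_simps add_pos_nonneg)
  moreover have "b ^ (2 * n) / (fact n * 2 ^ n) = s ^ n / fact n" for n
    unfolding s_def by (simp add: power_mult power_divide)
  ultimately show ?thesis
    unfolding F s_def[symmetric] by (simp add: algebra_simps)
qed

end
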